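(* Let $p$ be a prime and $b$ an integer with $0<b<p$. If $(p-b)(p-b^{-1})=pk+1$ for some integer $k>1$, then $|\mathrm{inv}_{1,b}|>4$.
   Context: Let $S=\mathbb{C}[x_1,x_2]$, $\zeta=e^{2\pi i/p}$, $G=\mathbb{Z}/p\mathbb{Z}=\langle\zeta\rangle$ acting on $S$ by $x_1\mapsto\zeta x_1$, $x_2\mapsto\zeta^bx_2$, with invariant ring $S^G_{1,b}$ (spanned by monomials $x_1^cx_2^d$ with $c+bd\equiv0\pmod p$). $\mathrm{inv}_{1,b}$ denotes the minimal set of monomial generators of $S^G_{1,b}$ as a $\mathbb{C}$-algebra: the nonconstant invariant monomials that are not a product of two nonconstant invariant monomials. $b^{-1}$ is the unique integer $0<b^{-1}<p$ with $bb^{-1}\equiv1\pmod p$. *)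

theory Defs
  imports "HOL-Number_Theory.Number_Theory"
begin

text \<open>A monomial x1^c x2^d of C[x1,x2] is represented by its exponent pair (c,d);
  multiplication of monomials is addition of exponent pairs.  The generator
  zeta of Z/pZ acts by x1 -> zeta x1, x2 -> zeta^b x2, so x1^c x2^d is invariant
  iff c + b d = 0 (mod p).\<close>

definition invariant_monomial :: "nat \<Rightarrow> nat \<Rightarrow> nat \<times> nat \<Rightarrow> bool" where
  "invariant_monomial p b m \<longleftrightarrow> [fst m + b * snd m = 0] (mod p)"

definition nonconstant :: "nat \<times> nat \<Rightarrow> bool" where
  "nonconstant m \<longleftrightarrow> m \<noteq> (0, 0)"

definition inv_gens :: "nat \<Rightarrow> nat \<Rightarrow> (nat \<times> nat) set" where
  "inv_gens p b = {m. nonconstant m \<and> invariant_monomial p b m \<and>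
      \<not> (\<exists>m1 m2. nonconstant m1 \<and> nonconstant m2 \<and> invariant_monomial p b m1 \<and>
                  invariant_monomial p b m2 \<and> m = (fst m1 + fst m2, snd m1 + snd m2))}"

definition binv :: "nat \<Rightarrow> nat \<Rightarrow> nat" where
  "binv p b = (THE x. 0 < x \<and> x < p \<and> [b * x = 1] (mod p))"

end

theory Submission
  imports Defs
begin

(* Invariant monomials x1^c x2^d are the exponent pairs with p | c + b d, and the minimal
   generators are exactly the componentwise minimal nonconstant ones.  Put a = p - b and
   a' = p - b^{-1}, so that the hypothesis reads a a' = p k + 1.  Then x1^p, x2^p, x1^a x2 and
   x1 x2^a' are generators, and so is x1^c x2^q with q = floor(p/a) + 1 and c = a q - p:
   an invariant (c', d') with 0 < d' < q and c' < p has c' = a d' (mod p) with a d' < p,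
   hence c' = a d' >= a > c.  The five are distinct because k > 1, as c = 1 and q = a'
   would give a a' = p + 1. *)

lemma invariant_monomial_iff_dvd: "invariant_monomial p b (c, d) \<longleftrightarrow> p dvd c + b * d"
  by (simp add: invariant_monomial_def cong_0_iff)

lemma mem_inv_gens_iff:
  "(c, d) \<in> inv_gens p b \<longleftrightarrow>
     (c, d) \<noteq> (0, 0) \<and> p dvd c + b * d \<and>
     (\<forall>c' d'. (c', d') \<noteq> (0, 0) \<and> p dvd c' + b * d' \<and> c' \<le> c \<and> d' \<le> d \<longrightarrow>
        c' = c \<and> d' = d)"
  (is "_ \<longleftrightarrow> ?nonconst \<and> ?inv \<and> ?minimal")
proof
  assume gen: "(c, d) \<in> inv_gens p b"
  then have ?nonconst ?inv
    by (simp_all add: inv_gens_def nonconstant_def invariant_monomial_iff_dvd)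
  have indecomposable: "False"
    if "nonconstant m1" "nonconstant m2" "invariant_monomial p b m1" "invariant_monomial p b m2"
      "(c, d) = (fst m1 + fst m2, snd m1 + snd m2)" for m1 m2
    using gen that unfolding inv_gens_def by blast
  have ?minimal
  proof (intro allI impI)
    fix c' d'
    assume "(c', d') \<noteq> (0, 0) \<and> p dvd c' + b * d' \<and> c' \<le> c \<and> d' \<le> d"
    then have nonconst': "nonconstant (c', d')" and inv': "p dvd c' + b * d'"
      and "c' \<le> c" "d' \<le> d"
      by (simp_all add: nonconstant_def)
    then obtain u v where c: "c = c' + u" and d: "d = d' + v"
      by (metis le_Suc_ex)
    have "c + b * d = (c' + b * d') + (u + b * v)"
      unfolding c d by (simp add: algebra_simps)
    with \<open>?inv\<close> inv' have "p dvd u + b * v"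
      by (simp add: dvd_add_right_iff)
    then have "\<not> nonconstant (u, v)"
      using indecomposable[of "(c', d')" "(u, v)"] nonconst' inv'
      by (auto simp add: invariant_monomial_iff_dvd c d)
    then show "c' = c \<and> d' = d"
      by (simp add: nonconstant_def c d)
  qed
  with \<open>?nonconst\<close> \<open>?inv\<close> show "?nonconst \<and> ?inv \<and> ?minimal"
    by blast
next
  assume "?nonconst \<and> ?inv \<and> ?minimal"
  then have ?nonconst ?inv ?minimal
    by blast+
  show "(c, d) \<in> inv_gens p b"
    unfolding inv_gens_def mem_Collect_eq
  proof (intro conjI notI)
    show "nonconstant (c, d)" "invariant_monomial p b (c, d)"
      using \<open>?nonconst\<close> \<open>?inv\<close> by (simp_all add: nonconstant_def invariant_monomial_iff_dvd)
  next
    assume "\<exists>m1 m2. nonconstant m1 \<and> nonconstant m2 \<and> invariant_monomial p b m1 \<and>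
      invariant_monomial p b m2 \<and> (c, d) = (fst m1 + fst m2, snd m1 + snd m2)"
    then obtain c1 d1 c2 d2 where nonconst2: "(c2, d2) \<noteq> (0, 0)"
      and "(c1, d1) \<noteq> (0, 0)" "p dvd c1 + b * d1" and c: "c = c1 + c2" and d: "d = d1 + d2"
      unfolding nonconstant_def by (metis fst_conv snd_conv invariant_monomial_iff_dvd prod.collapse)
    then have "c1 = c \<and> d1 = d"
      by (intro \<open>?minimal\<close>[rule_format]) (simp add: c d)
    with c d nonconst2 show False
      by simp
  qed
qed

lemma mem_inv_gensI:
  assumes "(c, d) \<noteq> (0, 0)" "p dvd c + b * d"
    and "\<And>c' d'. (c', d') \<noteq> (0, 0) \<Longrightarrow> p dvd c' + b * d' \<Longrightarrow> c' \<le> c \<Longrightarrow> d' \<le> d \<Longrightarrow>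
      c' = c \<and> d' = d"
  shows "(c, d) \<in> inv_gens p b"
  using assms unfolding mem_inv_gens_iff by blast

lemma invariant_fst_unique:
  fixes p :: nat
  assumes "p dvd c + b * d" "p dvd c' + b * d" "c < p" "c' < p"
  shows "c' = c"
proof -
  have "[c' + b * d = 0] (mod p)" "[c + b * d = 0] (mod p)"
    using assms(1,2) by (simp_all add: cong_0_iff)
  then have "[c' + b * d = c + b * d] (mod p)"
    by (metis cong_sym cong_trans)
  then have "[c' = c] (mod p)"
    by (simp add: cong_add_rcancel_nat)
  then show ?thesis
    using assms(4,3) by (rule cong_less_modulus_unique_nat)
qed

lemma invariant_snd_unique:
  fixes p :: nat
  assumes "coprime p b" "p dvd c + b * d" "p dvd c + b * d'" "d < p" "d' < p"
  shows "d' = d"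
proof -
  have "[c + b * d' = 0] (mod p)" "[c + b * d = 0] (mod p)"
    using assms(2,3) by (simp_all add: cong_0_iff)
  then have "[c + b * d' = c + b * d] (mod p)"
    by (metis cong_sym cong_trans)
  then have "[b * d' = b * d] (mod p)"
    by (simp add: cong_add_lcancel_nat)
  then have "[d' = d] (mod p)"
    using assms(1) by (simp add: cong_mult_lcancel_nat coprime_commute)
  then show ?thesis
    using assms(5,4) by (rule cong_less_modulus_unique_nat)
qed

lemma x1_power_mem_inv_gens:
  assumes "0 < p"
  shows "(p, 0) \<in> inv_gens p b"
  using assms by (auto simp: mem_inv_gens_iff dest: dvd_imp_le)

lemma x2_power_mem_inv_gens:
  assumes "0 < p" "coprime p b"
  shows "(0, p) \<in> inv_gens p b"
  using assms by (auto simp: mem_inv_gens_iff coprime_dvd_mult_right_iff dest: dvd_imp_le)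

lemma linear_in_x2_mem_inv_gens:
  fixes p :: nat
  assumes "p dvd c + b" "c < p"
  shows "(c, 1) \<in> inv_gens p b"
proof (rule mem_inv_gensI)
  fix c' d'
  assume "(c', d') \<noteq> (0, 0)" "p dvd c' + b * d'" "c' \<le> c" "d' \<le> 1"
  then show "c' = c \<and> d' = 1"
    using assms invariant_fst_unique[of p c b 1 c'] dvd_imp_le[of p c']
    by (auto simp: le_Suc_eq)
qed (use assms in auto)

lemma linear_in_x1_mem_inv_gens:
  fixes p :: nat
  assumes "coprime p b" "p dvd 1 + b * d" "d < p"
  shows "(1, d) \<in> inv_gens p b"
proof (rule mem_inv_gensI)
  fix c' d'
  assume "(c', d') \<noteq> (0, 0)" "p dvd c' + b * d'" "c' \<le> 1" "d' \<le> d"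
  then show "c' = 1 \<and> d' = d"
    using assms invariant_snd_unique[of p b 1 d d'] dvd_imp_le[of p d']
    by (auto simp: le_Suc_eq coprime_dvd_mult_right_iff)
qed (use assms in auto)

lemma mem_inv_gens_left_of_multiples:
  fixes p :: nat
  assumes "p dvd a + b" "p dvd c + b * d" "0 < c" "c < a" "a \<le> p" "a * (d - 1) < p"
  shows "(c, d) \<in> inv_gens p b"
proof (rule mem_inv_gensI)
  fix c' d'
  assume nonconst': "(c', d') \<noteq> (0, 0)" and inv': "p dvd c' + b * d'"
    and "c' \<le> c" "d' \<le> d"
  have "c' < p"
    using \<open>c' \<le> c\<close> assms(4,5) by linarith
  consider "d' = 0" | "0 < d'" "d' < d" | "d' = d"
    using \<open>d' \<le> d\<close> by linarith
  then show "c' = c \<and> d' = d"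
  proof cases
    case 1
    then show ?thesis
      using nonconst' inv' \<open>c' < p\<close> by (auto dest: dvd_imp_le)
  next
    case 2
    have "a * d' \<le> a * (d - 1)"
      using 2 by (intro mult_le_mono2) linarith
    with assms(6) have "a * d' < p"
      by linarith
    have "p dvd a * d' + b * d'"
      using assms(1) by (metis distrib_right dvd_mult2)
    then have "c' = a * d'"
      using invariant_fst_unique[OF _ inv' \<open>a * d' < p\<close> \<open>c' < p\<close>] by blast
    moreover have "a \<le> a * d'"
      using 2 by simp
    ultimately show ?thesis
      using \<open>c' \<le> c\<close> assms(4) by linarith
  next
    case 3
    have "c < p"
      using assms(4,5) by linarith
    with 3 show ?thesis
      using invariant_fst_unique[OF assms(2) _ _ \<open>c' < p\<close>] inv' by simp
  qed
qed (use assms in auto)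

lemma inv_gens_exponents_le:
  assumes "0 < p" "(c, d) \<in> inv_gens p b"
  shows "c \<le> p" "d \<le> p"
proof -
  have minimal: "c' = c \<and> d' = d"
    if "(c', d') \<noteq> (0, 0)" "p dvd c' + b * d'" "c' \<le> c" "d' \<le> d" for c' d'
    using assms(2) that unfolding mem_inv_gens_iff by blast
  show "c \<le> p"
    using minimal[of p 0] assms(1) by (cases "p \<le> c") auto
  show "d \<le> p"
    using minimal[of 0 p] assms(1) by (cases "p \<le> d") auto
qed

lemma finite_inv_gens:
  assumes "0 < p"
  shows "finite (inv_gens p b)"
proof (rule finite_subset)
  show "inv_gens p b \<subseteq> {..p} \<times> {..p}"
  proof (rule subrelI)
    fix c d
    assume "(c, d) \<in> inv_gens p b"
    then show "(c, d) \<in> {..p} \<times> {..p}"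
      using inv_gens_exponents_le[OF assms] by simp
  qed
qed simp

lemma factor_of_mult_plus_one_bounds:
  fixes p a a' k :: nat
  assumes "2 \<le> p" "0 < k" "a \<le> p" "a' \<le> p" "a * a' = p * k + 1"
  shows "1 < a" "a < p"
proof -
  have "a \<noteq> 0"
  proof
    assume "a = 0"
    with assms(5) show False
      by simp
  qed
  moreover have "a \<noteq> 1"
  proof
    assume "a = 1"
    then have "a' = p * k + 1"
      using assms(5) by simp
    moreover have "p \<le> p * k"
      using assms(2) by simp
    ultimately show False
      using assms(4) by linarith
  qed
  ultimately show "1 < a"
    by linarith
  have "p dvd p * k + 1 \<longleftrightarrow> p dvd 1"
    by (rule dvd_add_right_iff) simp
  with assms(1) have "\<not> p dvd p * k + 1"
    by simp
  then have "a \<noteq> p"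
    using assms(5) by (metis dvd_triv_left)
  with assms(3) show "a < p"
    by linarith
qed

lemma ceiling_multiple_mem_inv_gens:
  fixes p a :: nat
  assumes "0 < a" "a \<le> p" "\<not> a dvd p"
  obtains c q where "(c, q) \<in> inv_gens p (p - a)" "0 < c" "c < a" "c + p = a * q"
proof
  define r where "r = p mod a"
  have "0 < r" "r < a"
    using assms by (simp_all add: r_def mod_greater_zero_iff_not_dvd)
  have p: "p = a * (p div a) + r"
    by (simp add: r_def)
  show "0 < a - r" "a - r < a"
    using \<open>0 < r\<close> \<open>r < a\<close> by simp_all
  show sum: "a - r + p = a * (p div a + 1)"
    using \<open>r < a\<close> p by (simp add: algebra_simps)
  have "a - r + (p - a) * (p div a + 1) + p = p * (p div a + 1)"
    using sum assms(2) by (metis add.commute add.left_commute add_mult_distrib le_add_diff_inverse2)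
  then have "p dvd a - r + (p - a) * (p div a + 1)"
    by (metis dvd_add_times_triv_right_iff dvd_triv_left mult.commute mult_1_right)
  moreover have "a * (p div a + 1 - 1) < p"
    using \<open>0 < r\<close> p by simp
  ultimately show "(a - r, p div a + 1) \<in> inv_gens p (p - a)"
    using assms(2) \<open>0 < r\<close> \<open>r < a\<close>
    by (intro mem_inv_gens_left_of_multiples[where a = a]) simp_all
qed

lemma four_lt_card_inv_gens:
  fixes p a a' k :: nat
  assumes "prime p" "a \<le> p" "a' \<le> p" "a * a' = p * k + 1" "2 \<le> k"
  shows "4 < card (inv_gens p (p - a))"
proof -
  define b where "b = p - a"
  have "2 \<le> p"
    using assms(1) by (rule prime_ge_2_nat)
  have "0 < k"
    using assms(5) by simp
  have "1 < a" "a < p"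
    using factor_of_mult_plus_one_bounds[OF \<open>2 \<le> p\<close> \<open>0 < k\<close> assms(2,3,4)] by simp_all
  have "a' * a = p * k + 1"
    using assms(4) by (simp add: mult.commute)
  then have "1 < a'" "a' < p"
    using factor_of_mult_plus_one_bounds[OF \<open>2 \<le> p\<close> \<open>0 < k\<close> assms(3,2)] by simp_all
  have "\<not> p dvd b"
    using \<open>1 < a\<close> \<open>a < p\<close> by (auto simp: b_def dest: dvd_imp_le)
  then have "coprime p b"
    using assms(1) by (simp add: prime_imp_coprime)
  have "b * a' + a * a' = p * a'"
    using assms(2) by (simp add: b_def flip: add_mult_distrib)
  with assms(4) have "(1 + b * a') + p * k = p * a'"
    by linarith
  then have "p dvd 1 + b * a'"
    by (metis dvd_add_times_triv_right_iff dvd_triv_left mult.commute)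
  have "\<not> a dvd p"
    using assms(1) \<open>1 < a\<close> \<open>a < p\<close> by (auto simp: prime_nat_iff)
  then obtain c q where cq: "(c, q) \<in> inv_gens p b" "0 < c" "c < a" "c + p = a * q"
    using ceiling_multiple_mem_inv_gens[of a p] \<open>1 < a\<close> assms(2) unfolding b_def by auto
  have "(c, q) \<noteq> (1, a')"
  proof
    assume "(c, q) = (1, a')"
    then have "p * k + 1 = p + 1"
      using cq(4) assms(4) by auto
    then show False
      using \<open>2 \<le> p\<close> assms(5) by simp
  qed
  moreover have "q \<noteq> 0"
  proof
    assume "q = 0"
    with cq(4) \<open>2 \<le> p\<close> show False
      by simp
  qed
  ultimately have "card {(p, 0), (0, p), (a, 1), (1, a'), (c, q)} = 5"
    using \<open>2 \<le> p\<close> \<open>1 < a\<close> \<open>1 < a'\<close> cq(2,3) by (auto simp add: card_insert_if)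
  moreover have "{(p, 0), (0, p), (a, 1), (1, a'), (c, q)} \<subseteq> inv_gens p b"
  proof -
    have "p dvd a + b"
      using assms(2) by (simp add: b_def)
    then have "(a, 1) \<in> inv_gens p b"
      using \<open>a < p\<close> by (rule linear_in_x2_mem_inv_gens)
    moreover have "(1, a') \<in> inv_gens p b"
      using \<open>coprime p b\<close> \<open>p dvd 1 + b * a'\<close> \<open>a' < p\<close> by (rule linear_in_x1_mem_inv_gens)
    moreover have "(p, 0) \<in> inv_gens p b" "(0, p) \<in> inv_gens p b"
      using \<open>2 \<le> p\<close> \<open>coprime p b\<close> by (simp_all add: x1_power_mem_inv_gens x2_power_mem_inv_gens)
    ultimately show ?thesis
      using cq(1) by simp
  qed
  then have "card {(p, 0), (0, p), (a, 1), (1, a'), (c, q)} \<le> card (inv_gens p b)"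
    using \<open>2 \<le> p\<close> by (intro card_mono finite_inv_gens) simp_all
  ultimately show ?thesis
    by (simp add: b_def)
qed

theorem proposition3p16:
  fixes p b :: nat and k :: int
  assumes "prime p" and "0 < b" and "b < p"
    and "k > 1"
    and "(int p - int b) * (int p - int (binv p b)) = int p * k + 1"
  shows "card (inv_gens p b) > 4"
proof -
  define a where "a = p - b"
  define a' where "a' = nat (int p - int (binv p b))"
  have "a \<le> p" "b = p - a" "int a = int p - int b"
    using assms(3) by (simp_all add: a_def)
  have "0 < int p * k"
    using assms(1,4) prime_gt_0_nat by simp
  with assms(5) have "0 < int a * (int p - int (binv p b))"
    using \<open>int a = int p - int b\<close> by simp
  then have "0 < int p - int (binv p b)"
    by (rule zero_less_mult_pos) (use assms(2,3) a_def in simp)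
  then have "int a' = int p - int (binv p b)" "a' \<le> p"
    by (simp_all add: a'_def)
  then have "int (a * a') = int (p * nat k + 1)"
    using assms(4,5) \<open>int a = int p - int b\<close> by simp
  then have "a * a' = p * nat k + 1"
    by (simp only: of_nat_eq_iff)
  moreover have "2 \<le> nat k"
    using assms(4) by simp
  ultimately have "4 < card (inv_gens p (p - a))"
    using four_lt_card_inv_gens[OF assms(1) \<open>a \<le> p\<close> \<open>a' \<le> p\<close>] by blast
  with \<open>b = p - a\<close> show ?thesis
    by simp
qed

end
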